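(* Fix $a>0$. For $\beta>0$ let $f_\beta(x):=\frac14\big(a-e^{x/\beta}\big)$ and define $$\mathfrak{s}_\beta(x):=\int_{-1}^x\exp\Big(-2\int_0^u f_\beta(v)\,\mathrm{d}v\Big)\mathrm{d}u,\qquad \mathfrak{s}(x):=\int_{-1}^x\exp\Big(-2\int_0^u\frac a4\,\mathrm{d}v\Big)\mathrm{d}u.$$ Then for any $x_0<0$, $\mathfrak{s}_\beta'\to\mathfrak{s}'$ and $\mathfrak{s}_\beta\to\mathfrak{s}$ uniformly on $[x_0,0]$ as $\beta\to0$. Furthermore, $\mathfrak{s}_\beta(\beta^{1/6})\to\infty$ as $\beta\to 0$. *)

theory Defs
  imports "HOL-Analysis.Analysis"
begin

text \<open>Oriented one-dimensional integrals are written with the interval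
  Lebesgue integral LBINT x=a..b, which equals minus the integral over [b,a] when b < a.\<close>

definition f_beta :: "real \<Rightarrow> real \<Rightarrow> real \<Rightarrow> real" where
  "f_beta a \<beta> x = (a - exp (x / \<beta>)) / 4"

definition s_beta :: "real \<Rightarrow> real \<Rightarrow> real \<Rightarrow> real" where
  "s_beta a \<beta> x =
     (LBINT u=ereal (-1)..ereal x. exp (- 2 * (LBINT v=ereal 0..ereal u. f_beta a \<beta> v)))"

definition s_lim :: "real \<Rightarrow> real \<Rightarrow> real" where
  "s_lim a x =
     (LBINT u=ereal (-1)..ereal x. exp (- 2 * (LBINT v=ereal 0..ereal u. a / 4)))"

end

theory Submission
  imports Defs "HOL-Real_Asymp.Real_Asymp"
begin

text \<open>For \<open>\<beta> > 0\<close> the inner integral is explicit,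
  \<open>\<integral>\<^sub>0\<^sup>u f\<^sub>\<beta> = (a u - \<beta> (e\<^bsup>u/\<beta>\<^esup> - 1)) / 4\<close>, so the scale density
  \<open>s\<^sub>\<beta>'(u) = s'(u) \<cdot> exp (\<beta> (e\<^bsup>u/\<beta>\<^esup> - 1) / 2)\<close>.
  For \<open>u \<le> 0\<close> the correction factor lies in \<open>[e\<^bsup>-\<beta>/2\<^esup>, 1]\<close>, so
  \<open>s\<^sub>\<beta>' - s' = O(\<beta>)\<close> uniformly on compact subsets of \<open>(-\<infinity>, 0]\<close>; since both scale
  functions vanish at \<open>-1\<close>, integrating gives \<open>s\<^sub>\<beta> - s = O(\<beta>)\<close> as well.
  For \<open>u > 0\<close> the correction factor is at least \<open>u\<^sup>2 / (4 \<beta>)\<close>; with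
  \<open>t = \<beta>\<^bsup>1/6\<^esup>\<close> the density exceeds a multiple of \<open>t\<^sup>2/\<beta>\<close> on \<open>[t/2, t]\<close>,
  hence \<open>s\<^sub>\<beta>(t) \<ge> c t\<^sup>3/\<beta> = c / \<surd>\<beta>\<close>.\<close>

lemma uniform_limit_if_dist_le:
  assumes "\<forall>\<^sub>F n in F. \<forall>x\<in>S. dist (f n x) (l x) \<le> g n" and "(g \<longlongrightarrow> 0) F"
  shows "uniform_limit S f l F"
proof (rule uniform_limitI)
  fix e :: real
  assume "e > 0"
  with assms(2) have "\<forall>\<^sub>F n in F. g n < e"
    by (simp add: order_tendstoD(2))
  with assms(1) show "\<forall>\<^sub>F n in F. \<forall>x\<in>S. dist (f n x) (l x) < e"
    by eventually_elim force
qed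

lemma has_real_derivative_interval_integral:
  fixes G :: "real \<Rightarrow> real"
  assumes "continuous_on UNIV G"
  shows "((\<lambda>x. LBINT u=ereal c..ereal x. G u) has_real_derivative G x) (at x)"
proof -
  let ?a = "min c x - 1" and ?b = "max c x + 1"
  have "((\<lambda>x. LBINT u=ereal c..ereal x. G u) has_vector_derivative G x) (at x within {?a..?b})"
    by (rule interval_integral_FTC2) (auto intro: continuous_on_subset[OF assms])
  moreover have "at x within {?a..?b} = at x"
    by (rule at_within_Icc_at) auto
  ultimately show ?thesis
    by (simp add: has_real_derivative_iff_has_vector_derivative)
qed

definition s_beta_density :: "real \<Rightarrow> real \<Rightarrow> real \<Rightarrow> real" where
  "s_beta_density a \<beta> u = exp (- (a * u - \<beta> * (exp (u / \<beta>) - 1)) / 2)"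

definition s_lim_density :: "real \<Rightarrow> real \<Rightarrow> real" where
  "s_lim_density a u = exp (- a * u / 2)"

lemma interval_integral_f_beta:
  assumes "\<beta> \<noteq> 0"
  shows "(LBINT v=ereal 0..ereal u. f_beta a \<beta> v) = (a * u - \<beta> * (exp (u / \<beta>) - 1)) / 4"
proof -
  let ?F = "\<lambda>v. (a * v - \<beta> * exp (v / \<beta>)) / 4"
  have "(LBINT v=ereal 0..ereal u. f_beta a \<beta> v) = ?F u - ?F 0"
  proof (rule interval_integral_FTC_finite)
    show "continuous_on {min 0 u..max 0 u} (f_beta a \<beta>)"
      unfolding f_beta_def using assms by (auto intro!: continuous_intros)
    fix x
    have "(?F has_real_derivative f_beta a \<beta> x) (at x)"
      unfolding f_beta_def using assms by (auto intro!: derivative_eq_intros)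
    then show "(?F has_vector_derivative f_beta a \<beta> x) (at x within {min 0 u..max 0 u})"
      by (simp add: has_real_derivative_iff_has_vector_derivative has_vector_derivative_at_within)
  qed
  then show ?thesis
    by (simp add: algebra_simps diff_divide_distrib)
qed

lemma s_beta_eq_interval_integral:
  assumes "\<beta> \<noteq> 0"
  shows "s_beta a \<beta> x = (LBINT u=ereal (-1)..ereal x. s_beta_density a \<beta> u)"
proof -
  have "- 2 * (X / 4) = - X / 2" for X :: real
    by simp
  then show ?thesis
    unfolding s_beta_def s_beta_density_def by (simp only: interval_integral_f_beta[OF assms])
qed

lemma s_lim_eq_interval_integral:
  "s_lim a x = (LBINT u=ereal (-1)..ereal x. s_lim_density a u)"
  unfolding s_lim_def s_lim_density_def by (simp add: mult.commute)

lemma s_beta_has_derivative: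
  assumes "\<beta> \<noteq> 0"
  shows "(s_beta a \<beta> has_real_derivative s_beta_density a \<beta> x) (at x)"
proof -
  have "continuous_on UNIV (s_beta_density a \<beta>)"
    unfolding s_beta_density_def using assms by (auto intro!: continuous_intros)
  then show ?thesis
    by (simp add: s_beta_eq_interval_integral[OF assms, abs_def] has_real_derivative_interval_integral)
qed

lemma s_lim_has_derivative: "(s_lim a has_real_derivative s_lim_density a x) (at x)"
proof -
  have "continuous_on UNIV (s_lim_density a)"
    unfolding s_lim_density_def by (auto intro!: continuous_intros)
  then show ?thesis
    by (simp add: s_lim_eq_interval_integral[abs_def] has_real_derivative_interval_integral)
qed

lemma deriv_s_beta: "\<beta> \<noteq> 0 \<Longrightarrow> deriv (s_beta a \<beta>) = s_beta_density a \<beta>"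
  using s_beta_has_derivative by (blast intro: DERIV_imp_deriv)

lemma deriv_s_lim: "deriv (s_lim a) = s_lim_density a"
  using s_lim_has_derivative by (blast intro: DERIV_imp_deriv)

lemma s_beta_minus_one [simp]: "\<beta> \<noteq> 0 \<Longrightarrow> s_beta a \<beta> (-1) = 0"
  by (simp add: s_beta_eq_interval_integral)

lemma s_lim_minus_one [simp]: "s_lim a (-1) = 0"
  by (simp add: s_lim_eq_interval_integral)

lemma s_beta_density_eq:
  "s_beta_density a \<beta> u = s_lim_density a u * exp (\<beta> * (exp (u / \<beta>) - 1) / 2)"
  unfolding s_beta_density_def s_lim_density_def by (simp add: exp_add[symmetric] field_simps)

lemma s_lim_density_antimono:
  assumes "a \<ge> 0" and "m \<le> u"
  shows "s_lim_density a u \<le> s_lim_density a m"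
  unfolding s_lim_density_def using assms by (simp add: mult_left_mono)

lemma abs_s_beta_density_diff_le:
  assumes "a \<ge> 0" and "\<beta> > 0" and "m \<le> u" and "u \<le> 0"
  shows "\<bar>s_beta_density a \<beta> u - s_lim_density a u\<bar> \<le> s_lim_density a m * \<beta> / 2"
proof -
  define h where "h = \<beta> * (exp (u / \<beta>) - 1) / 2"
  have "exp (u / \<beta>) \<le> 1"
    using assms by (simp add: divide_nonpos_pos)
  then have "- \<beta> / 2 \<le> h" and "h \<le> 0"
    unfolding h_def using assms by (simp_all add: mult_nonneg_nonpos field_simps)
  moreover have "1 + h \<le> exp h"
    by (rule exp_ge_add_one_self)
  moreover have "exp h \<le> 1"
    using \<open>h \<le> 0\<close> by simp
  ultimately have "\<bar>exp h - 1\<bar> \<le> \<beta> / 2"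
    by linarith
  moreover have "s_lim_density a u \<le> s_lim_density a m"
    using assms by (intro s_lim_density_antimono)
  ultimately have "s_lim_density a u * \<bar>exp h - 1\<bar> \<le> s_lim_density a m * (\<beta> / 2)"
    by (intro mult_mono) (auto simp: s_lim_density_def)
  moreover have "s_beta_density a \<beta> u - s_lim_density a u = s_lim_density a u * (exp h - 1)"
    unfolding s_beta_density_eq h_def by (simp add: algebra_simps)
  ultimately show ?thesis
    by (simp add: abs_mult s_lim_density_def)
qed

lemma abs_s_beta_minus_s_lim_le:
  assumes "a \<ge> 0" and "\<beta> > 0" and "m \<le> -1" and "m \<le> x" and "x \<le> 0"
  shows "\<bar>s_beta a \<beta> x - s_lim a x\<bar> \<le> s_lim_density a m * \<beta> / 2 * \<bar>x + 1\<bar>"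
proof -
  let ?D = "\<lambda>x. s_beta a \<beta> x - s_lim a x"
  have "norm (?D x - ?D (-1)) \<le> s_lim_density a m * \<beta> / 2 * norm (x - (-1))"
  proof (rule field_differentiable_bound[of "{m..0}"])
    fix z
    show "(?D has_field_derivative s_beta_density a \<beta> z - s_lim_density a z) (at z within {m..0})"
      using assms(2)
      by (intro has_field_derivative_at_within[OF DERIV_diff] s_beta_has_derivative
          s_lim_has_derivative) simp
    assume "z \<in> {m..0}"
    then show "norm (s_beta_density a \<beta> z - s_lim_density a z) \<le> s_lim_density a m * \<beta> / 2"
      using abs_s_beta_density_diff_le[OF assms(1,2)] by simp
  qed (use assms in auto)
  then show ?thesis
    using assms(2) by simp
qed

lemma s_beta_strict_mono:
  assumes "\<beta> \<noteq> 0" and "x < y"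
  shows "s_beta a \<beta> x < s_beta a \<beta> y"
  using assms(2)
proof (rule DERIV_pos_imp_increasing)
  fix z
  have "s_beta_density a \<beta> z > 0"
    by (simp add: s_beta_density_def)
  then show "\<exists>d. DERIV (s_beta a \<beta>) z :> d \<and> d > 0"
    using s_beta_has_derivative[OF assms(1)] by blast
qed

lemma s_beta_density_lower_bound:
  assumes "a \<ge> 0" and "\<beta> > 0" and "0 \<le> u" and "u \<le> 1"
  shows "exp (- a / 2) * (u\<^sup>2 / (4 * \<beta>)) \<le> s_beta_density a \<beta> u"
proof -
  define h where "h = \<beta> * (exp (u / \<beta>) - 1) / 2"
  have "1 + u / \<beta> + (u / \<beta>)\<^sup>2 / 2 \<le> exp (u / \<beta>)"
    using assms by (intro exp_lower_Taylor_quadratic) simp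
  then have "\<beta> * (u / \<beta> + (u / \<beta>)\<^sup>2 / 2) \<le> \<beta> * (exp (u / \<beta>) - 1)"
    using assms(2) by (intro mult_left_mono) auto
  moreover have "\<beta> * (u / \<beta> + (u / \<beta>)\<^sup>2 / 2) = u + u\<^sup>2 / (2 * \<beta>)"
    using assms(2) by (simp add: field_simps power2_eq_square)
  moreover have "h \<le> exp h"
    using exp_ge_add_one_self[of h] by linarith
  ultimately have "u\<^sup>2 / (4 * \<beta>) \<le> exp h"
    unfolding h_def using assms(3) by (simp add: field_simps)
  moreover have "exp (- a / 2) \<le> s_lim_density a u"
    using s_lim_density_antimono[OF assms(1) assms(4)] by (simp add: s_lim_density_def)
  ultimately show ?thesis
    unfolding s_beta_density_eq h_def using assms(2) by (intro mult_mono) (auto simp: s_lim_density_def)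
qed

lemma s_beta_lower_bound:
  assumes "a \<ge> 0" and "\<beta> > 0" and "0 < t" and "t \<le> 1"
  shows "exp (- a / 2) * t ^ 3 / (32 * \<beta>) \<le> s_beta a \<beta> t"
proof -
  have "s_beta a \<beta> (-1) < s_beta a \<beta> (t / 2)"
    using assms by (intro s_beta_strict_mono) auto
  then have "0 \<le> s_beta a \<beta> (t / 2)"
    using assms(2) by simp
  obtain z where z: "t / 2 < z" "z < t"
    and mvt: "s_beta a \<beta> t - s_beta a \<beta> (t / 2) = (t - t / 2) * s_beta_density a \<beta> z"
    using MVT2[of "t / 2" t "s_beta a \<beta>" "s_beta_density a \<beta>"] assms s_beta_has_derivative
    by fastforce
  have "(t / 2)\<^sup>2 \<le> z\<^sup>2"
    using z assms(3) by (intro power_mono) auto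
  then have "exp (- a / 2) * ((t / 2)\<^sup>2 / (4 * \<beta>)) \<le> exp (- a / 2) * (z\<^sup>2 / (4 * \<beta>))"
    using assms(2) by (intro mult_left_mono divide_right_mono) auto
  also have "\<dots> \<le> s_beta_density a \<beta> z"
    using z assms by (intro s_beta_density_lower_bound) auto
  finally have "t / 2 * (exp (- a / 2) * ((t / 2)\<^sup>2 / (4 * \<beta>))) \<le> t / 2 * s_beta_density a \<beta> z"
    using assms(3) by (intro mult_left_mono) auto
  then show ?thesis
    using mvt \<open>0 \<le> s_beta a \<beta> (t / 2)\<close> by (simp add: power2_eq_square power3_eq_cube field_simps)
qed

lemma uniform_limit_deriv_s_beta:
  assumes "a \<ge> 0"
  shows "uniform_limit {x0..0} (\<lambda>\<beta>. deriv (s_beta a \<beta>)) (deriv (s_lim a)) (at_right 0)"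
proof (rule uniform_limit_if_dist_le)
  let ?C = "s_lim_density a (min (-1) x0) / 2"
  show "\<forall>\<^sub>F \<beta> in at_right 0. \<forall>x\<in>{x0..0}. dist (deriv (s_beta a \<beta>) x) (deriv (s_lim a) x) \<le> ?C * \<beta>"
    using eventually_at_right_less
  proof eventually_elim
    case (elim \<beta>)
    then show ?case
      using abs_s_beta_density_diff_le[OF assms, of \<beta> "min (-1) x0"]
      by (auto simp: deriv_s_beta deriv_s_lim dist_real_def)
  qed
qed (auto intro!: tendsto_eq_intros)

lemma uniform_limit_s_beta:
  assumes "a \<ge> 0"
  shows "uniform_limit {x0..0} (\<lambda>\<beta>. s_beta a \<beta>) (s_lim a) (at_right 0)"
proof (rule uniform_limit_if_dist_le)
  let ?C = "s_lim_density a (min (-1) x0) / 2"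
  have "?C \<ge> 0"
    by (simp add: s_lim_density_def)
  show "\<forall>\<^sub>F \<beta> in at_right 0. \<forall>x\<in>{x0..0}. dist (s_beta a \<beta> x) (s_lim a x) \<le> ?C * \<beta> * (1 - x0)"
    using eventually_at_right_less
  proof eventually_elim
    case (elim \<beta>)
    show ?case
    proof
      fix x
      assume x: "x \<in> {x0..0}"
      then have "\<bar>s_beta a \<beta> x - s_lim a x\<bar> \<le> ?C * \<beta> * \<bar>x + 1\<bar>"
        using abs_s_beta_minus_s_lim_le[OF assms elim, of "min (-1) x0" x] by auto
      also have "\<dots> \<le> ?C * \<beta> * (1 - x0)"
        using x elim \<open>?C \<ge> 0\<close> by (intro mult_left_mono) auto
      finally show "dist (s_beta a \<beta> x) (s_lim a x) \<le> ?C * \<beta> * (1 - x0)"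
        by (simp add: dist_real_def)
    qed
  qed
qed (auto intro!: tendsto_eq_intros)

lemma filterlim_s_beta_powr_one_sixth:
  assumes "a \<ge> 0"
  shows "filterlim (\<lambda>\<beta>. s_beta a \<beta> (\<beta> powr (1/6))) at_top (at_right 0)"
proof (rule filterlim_at_top_mono)
  show "filterlim (\<lambda>\<beta>. exp (- a / 2) * (\<beta> powr (1/6)) ^ 3 / (32 * \<beta>)) at_top (at_right 0)"
    by real_asymp
  have "\<forall>\<^sub>F \<beta> in at_right 0. \<beta> < (1::real)"
    by (rule eventually_at_rightI[of 0 1]) auto
  with eventually_at_right_less
  show "\<forall>\<^sub>F \<beta> in at_right 0. exp (- a / 2) * (\<beta> powr (1/6)) ^ 3 / (32 * \<beta>) \<le> s_beta a \<beta> (\<beta> powr (1/6))"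
  proof eventually_elim
    case (elim \<beta>)
    then have "\<beta> powr (1/6) \<le> 1"
      using powr_mono2[of "1/6" \<beta> 1] by simp
    with elim show ?case
      using assms by (intro s_beta_lower_bound) auto
  qed
qed

theorem lemma5p2:
  fixes a x0 :: real
  assumes "a > 0" and "x0 < 0"
  shows "uniform_limit {x0..0} (\<lambda>\<beta>. deriv (s_beta a \<beta>)) (deriv (s_lim a)) (at_right 0)
     \<and> uniform_limit {x0..0} (\<lambda>\<beta>. s_beta a \<beta>) (s_lim a) (at_right 0)
     \<and> filterlim (\<lambda>\<beta>. s_beta a \<beta> (\<beta> powr (1/6))) at_top (at_right 0)"
  using assms(1)
  by (intro conjI uniform_limit_deriv_s_beta uniform_limit_s_beta filterlim_s_beta_powr_one_sixth) simp_all

end
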